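(* For every compact set $V\subset\mathcal{A}_0$, $$\mathrm{bor}(V^* )=V^*\setminus(\mathrm{cm}(V))^T.$$
   Context: $D=\{z:|z|<1\}$, $\overline D$ its closure. $\mathcal{A}$ is the space of functions $f(z)=\sum_{k\ge0}a_k(f)z^k$ analytic in $D$, with the topology of locally uniform convergence; $\mathcal{A}_0=\{f\in\mathcal{A}: a_0(f)=1\}$. $\mathcal{A}(\overline D)$ is the set of functions analytic in some disk $\{|z|<R\}$ with $R>1$, and $\mathcal{A}_0(\overline D)=\{g\in\mathcal{A}(\overline D):a_0(g)=1\}$. The Hadamard product is $(f*g)(z)=\sum_{k\ge0}a_k(f)a_k(g)z^k$. For $V\subset\mathcal{A}_0$, $V^*=\{g\in\mathcal{A}_0:(f*g)(z)\ne0 \ \forall z\in D,\ \forall f\in V\}$ and $V^T=\{g\in\mathcal{A}_0(\overline D): (f*g)(1)\ne0 \ \forall f\in V\}$. For $x\in\overline D$, $(P_xf)(z)=f(xz)$, and $\mathrm{cm}(V)=\{P_xf:f\in V,\ x\in\overline D\}$. Let $e\equiv1$. For $W\subset\mathcal{A}_0$ with $W\ne\{e\}$, $f\in W$ is a border element of $W$ if whenever $f=P_xg$ with $g\in W$, $x\in\overline D$, then $|x|=1$; $\mathrm{bor}(W)$ is the set of border elements; if $W=\{e\}$, $\mathrm{bor}(W)=\{e\}$. *)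

theory Defs
  imports "HOL-Analysis.Analysis"
begin

text \<open>An analytic function f(z) = sum a_k z^k is represented by its Taylor
  coefficient sequence a :: nat => complex.\<close>

definition ev :: "(nat \<Rightarrow> complex) \<Rightarrow> complex \<Rightarrow> complex" where
  "ev a z = (\<Sum>k. a k * z ^ k)"

definition AD :: "(nat \<Rightarrow> complex) set" where
  "AD = {a. \<forall>z. norm z < 1 \<longrightarrow> summable (\<lambda>k. a k * z ^ k)}"

definition A0 :: "(nat \<Rightarrow> complex) set" where
  "A0 = {a \<in> AD. a 0 = 1}"

definition AcD :: "(nat \<Rightarrow> complex) set" where
  "AcD = {a. \<exists>R>1. \<forall>z. norm z < R \<longrightarrow> summable (\<lambda>k. a k * z ^ k)}"

definition A0cD :: "(nat \<Rightarrow> complex) set" where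
  "A0cD = {a \<in> AcD. a 0 = 1}"

text \<open>Topology of locally uniform convergence on D (carrier AD).\<close>
definition LU :: "(nat \<Rightarrow> complex) topology" where
  "LU = topology (\<lambda>U. U \<subseteq> AD \<and>
      (\<forall>f\<in>U. \<exists>r<1. \<exists>\<epsilon>>0. \<forall>g\<in>AD.
         (\<forall>z. norm z \<le> r \<longrightarrow> norm (ev g z - ev f z) < \<epsilon>) \<longrightarrow> g \<in> U))"

definition hada :: "(nat \<Rightarrow> complex) \<Rightarrow> (nat \<Rightarrow> complex) \<Rightarrow> (nat \<Rightarrow> complex)" where
  "hada f g = (\<lambda>k. f k * g k)"

definition dual_star :: "(nat \<Rightarrow> complex) set \<Rightarrow> (nat \<Rightarrow> complex) set" where
  "dual_star V = {g \<in> A0. \<forall>f\<in>V. \<forall>z. norm z < 1 \<longrightarrow> ev (hada f g) z \<noteq> 0}"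

definition dual_T :: "(nat \<Rightarrow> complex) set \<Rightarrow> (nat \<Rightarrow> complex) set" where
  "dual_T V = {g \<in> A0cD. \<forall>f\<in>V. ev (hada f g) 1 \<noteq> 0}"

text \<open>(P_x f)(z) = f(xz), on coefficients.\<close>
definition Px :: "complex \<Rightarrow> (nat \<Rightarrow> complex) \<Rightarrow> (nat \<Rightarrow> complex)" where
  "Px x f = (\<lambda>k. f k * x ^ k)"

definition cm :: "(nat \<Rightarrow> complex) set \<Rightarrow> (nat \<Rightarrow> complex) set" where
  "cm V = {Px x f | f x. f \<in> V \<and> norm x \<le> 1}"

definition one_fn :: "nat \<Rightarrow> complex" where
  "one_fn = (\<lambda>k. if k = 0 then 1 else 0)"

definition bor :: "(nat \<Rightarrow> complex) set \<Rightarrow> (nat \<Rightarrow> complex) set" where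
  "bor W = (if W = {one_fn} then {one_fn}
            else {f \<in> W. \<forall>g\<in>W. \<forall>x. norm x \<le> 1 \<longrightarrow> f = Px x g \<longrightarrow> norm x = 1})"

end

(*
  If g = P_x h with h in V* and |x| < 1, then g is analytic on the disc of radius 1/|x| > 1
  and (P_y f * g)(1) = (f * h)(xy) is nonzero for f in V and |y| <= 1, so g lies in cm(V)^T.
  Conversely, g in cm(V)^T means that f * g has no zeros on the closed unit disc for every
  f in V. Cauchy estimates make f |-> f * g continuous from locally uniform convergence to
  uniform convergence on a disc of radius > 1, so a zero-free disc of radius > 1 persists
  near each f; compactness of V yields one radius rho > 1 for all of V. Then P_rho g lies in
  V* and g = P_(1/rho) (P_rho g), so g is not a border element. Thus the border elements of
  V* are exactly those outside cm(V)^T, provided V* is not {e}; and V* contains 1 + cz for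
  small c, since the first Taylor coefficients are bounded on the compact set V.
*)
theory Submission
  imports Defs "HOL-Complex_Analysis.Cauchy_Integral_Formula"
begin

definition lu_nbhd :: "(nat \<Rightarrow> complex) \<Rightarrow> real \<Rightarrow> real \<Rightarrow> (nat \<Rightarrow> complex) set" where
  "lu_nbhd f r \<epsilon> = {g \<in> AD. \<forall>z. norm z \<le> r \<longrightarrow> norm (ev g z - ev f z) < \<epsilon>}"

lemma lu_nbhd_antimono: "r \<le> r' \<Longrightarrow> \<epsilon>' \<le> \<epsilon> \<Longrightarrow> lu_nbhd f r' \<epsilon>' \<subseteq> lu_nbhd f r \<epsilon>"
  unfolding lu_nbhd_def by (auto dest: order_trans intro: less_le_trans)

lemma self_in_lu_nbhd: "f \<in> AD \<Longrightarrow> 0 < \<epsilon> \<Longrightarrow> f \<in> lu_nbhd f r \<epsilon>"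
  by (simp add: lu_nbhd_def)

lemma lu_nbhd_triangle: "g \<in> lu_nbhd f r \<delta> \<Longrightarrow> lu_nbhd g r \<eta> \<subseteq> lu_nbhd f r (\<eta> + \<delta>)"
  by (auto simp: lu_nbhd_def intro: norm_diff_triangle_less)

lemma openin_LU: "openin LU U \<longleftrightarrow> U \<subseteq> AD \<and> (\<forall>f\<in>U. \<exists>r<1. \<exists>\<epsilon>>0. lu_nbhd f r \<epsilon> \<subseteq> U)"
proof -
  define lu_open where
    "lu_open U \<longleftrightarrow> U \<subseteq> AD \<and> (\<forall>f\<in>U. \<exists>r<1. \<exists>\<epsilon>>0. lu_nbhd f r \<epsilon> \<subseteq> U)" for U
  have LU_eq: "LU = topology lu_open"
    unfolding LU_def lu_open_def lu_nbhd_def subset_iff mem_Collect_eq by (simp only: imp_conjL Ball_def)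
  have "lu_open (S \<inter> T)" if ST: "lu_open S" "lu_open T" for S T
    unfolding lu_open_def
  proof (intro conjI ballI)
    show "S \<inter> T \<subseteq> AD"
      using ST by (auto simp: lu_open_def)
    fix f assume "f \<in> S \<inter> T"
    then obtain r1 \<epsilon>1 r2 \<epsilon>2 where "r1 < 1" "\<epsilon>1 > 0" "lu_nbhd f r1 \<epsilon>1 \<subseteq> S"
      and "r2 < 1" "\<epsilon>2 > 0" "lu_nbhd f r2 \<epsilon>2 \<subseteq> T"
      using ST unfolding lu_open_def by blast
    moreover have "lu_nbhd f (max r1 r2) (min \<epsilon>1 \<epsilon>2) \<subseteq> lu_nbhd f r1 \<epsilon>1 \<inter> lu_nbhd f r2 \<epsilon>2"
      by (intro Int_greatest lu_nbhd_antimono) auto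
    ultimately have "lu_nbhd f (max r1 r2) (min \<epsilon>1 \<epsilon>2) \<subseteq> S \<inter> T"
      by blast
    moreover have "max r1 r2 < 1" "min \<epsilon>1 \<epsilon>2 > 0"
      using \<open>r1 < 1\<close> \<open>r2 < 1\<close> \<open>\<epsilon>1 > 0\<close> \<open>\<epsilon>2 > 0\<close> by auto
    ultimately show "\<exists>r<1. \<exists>\<epsilon>>0. lu_nbhd f r \<epsilon> \<subseteq> S \<inter> T"
      by blast
  qed
  moreover have "lu_open (\<Union>\<K>)" if K: "\<forall>S\<in>\<K>. lu_open S" for \<K>
    unfolding lu_open_def
  proof (intro conjI ballI)
    show "\<Union>\<K> \<subseteq> AD"
      using K by (auto simp: lu_open_def)
    fix f assume "f \<in> \<Union>\<K>"
    then obtain S where "S \<in> \<K>" "f \<in> S"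
      by blast
    then obtain r \<epsilon> where "r < 1" "\<epsilon> > 0" "lu_nbhd f r \<epsilon> \<subseteq> S"
      using K unfolding lu_open_def by blast
    then show "\<exists>r<1. \<exists>\<epsilon>>0. lu_nbhd f r \<epsilon> \<subseteq> \<Union>\<K>"
      using \<open>S \<in> \<K>\<close> by blast
  qed
  ultimately have "istopology lu_open"
    unfolding istopology_def by blast
  then show ?thesis
    unfolding LU_eq lu_open_def[symmetric] by simp
qed

lemma in_LU_interior_of:
  assumes "f \<in> AD" "r < 1" "\<epsilon> > 0" "lu_nbhd f r \<epsilon> \<subseteq> S"
  shows "f \<in> LU interior_of S"
proof -
  define W where "W = {h \<in> AD. \<exists>r<1. \<exists>\<epsilon>>0. lu_nbhd h r \<epsilon> \<subseteq> S}"
  have "openin LU W"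
    unfolding openin_LU
  proof (intro conjI ballI)
    show "W \<subseteq> AD"
      unfolding W_def by blast
    fix h assume "h \<in> W"
    then obtain r \<epsilon> where r: "r < 1" "\<epsilon> > 0" "lu_nbhd h r \<epsilon> \<subseteq> S"
      unfolding W_def by blast
    have "\<epsilon>/2 > 0"
      using r(2) by simp
    have "lu_nbhd h r (\<epsilon>/2) \<subseteq> W"
    proof
      fix g assume g: "g \<in> lu_nbhd h r (\<epsilon>/2)"
      have "lu_nbhd g r (\<epsilon>/2) \<subseteq> S"
        using lu_nbhd_triangle[OF g, of "\<epsilon>/2"] r(3) by simp
      moreover have "g \<in> AD"
        using g by (simp add: lu_nbhd_def)
      ultimately show "g \<in> W"
        unfolding W_def using r(1) \<open>\<epsilon>/2 > 0\<close> by blast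
    qed
    then show "\<exists>r<1. \<exists>\<epsilon>>0. lu_nbhd h r \<epsilon> \<subseteq> W"
      using r(1) \<open>\<epsilon>/2 > 0\<close> by blast
  qed
  moreover have "W \<subseteq> S"
  proof
    fix h assume "h \<in> W"
    then obtain r \<epsilon> where "h \<in> AD" "\<epsilon> > 0" "lu_nbhd h r \<epsilon> \<subseteq> S"
      unfolding W_def by blast
    then show "h \<in> S"
      using self_in_lu_nbhd by blast
  qed
  moreover have "f \<in> W"
    unfolding W_def using assms by blast
  ultimately show ?thesis
    using interior_of_maximal[of W S LU] by blast
qed

lemma compactin_LU_finite_cover:
  assumes "compactin LU V" "V \<subseteq> AD"
    and "\<And>f. f \<in> V \<Longrightarrow> \<exists>r<1. \<exists>\<epsilon>>0. lu_nbhd f r \<epsilon> \<subseteq> S f"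
  shows "\<exists>F. finite F \<and> F \<subseteq> V \<and> V \<subseteq> (\<Union>f\<in>F. S f)"
proof -
  let ?\<U> = "(\<lambda>f. LU interior_of S f) ` V"
  have "V \<subseteq> \<Union>?\<U>"
  proof
    fix f assume "f \<in> V"
    then have "f \<in> LU interior_of S f"
      using assms(2,3) in_LU_interior_of by blast
    then show "f \<in> \<Union>?\<U>"
      using \<open>f \<in> V\<close> by blast
  qed
  moreover have "\<forall>U\<in>?\<U>. openin LU U"
    by simp
  ultimately obtain \<F> where "finite \<F>" "\<F> \<subseteq> ?\<U>" "V \<subseteq> \<Union>\<F>"
    using assms(1) unfolding compactin_def by meson
  then obtain F where "F \<subseteq> V" "finite F" "\<F> = (\<lambda>f. LU interior_of S f) ` F"
    using finite_subset_image by meson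
  have "V \<subseteq> (\<Union>f\<in>F. LU interior_of S f)"
    using \<open>V \<subseteq> \<Union>\<F>\<close> \<open>\<F> = (\<lambda>f. LU interior_of S f) ` F\<close> by simp
  also have "\<dots> \<subseteq> (\<Union>f\<in>F. S f)"
    by (intro UN_mono order_refl interior_of_subset)
  finally show ?thesis
    using \<open>F \<subseteq> V\<close> \<open>finite F\<close> by blast
qed

lemma ev_Px: "ev (Px x f) z = ev f (x * z)"
  by (simp add: ev_def Px_def power_mult_distrib mult_ac)

lemma summable_Px_iff: "summable (\<lambda>k. Px x f k * z ^ k) \<longleftrightarrow> summable (\<lambda>k. f k * (x * z) ^ k)"
  by (simp add: Px_def power_mult_distrib mult_ac)

lemma hada_Px_left: "hada (Px x f) g = Px x (hada f g)"
  by (simp add: hada_def Px_def fun_eq_iff mult_ac)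

lemma hada_Px_right: "hada f (Px x g) = Px x (hada f g)"
  by (simp add: hada_def Px_def fun_eq_iff mult_ac)

lemma Px_Px: "Px x (Px y f) = Px (x * y) f"
  by (simp add: Px_def fun_eq_iff power_mult_distrib mult_ac)

lemma Px_1: "Px 1 f = f"
  by (simp add: Px_def)

lemma ev_diff:
  assumes "summable (\<lambda>k. a k * z ^ k)" "summable (\<lambda>k. b k * z ^ k)"
  shows "ev (\<lambda>k. a k - b k) z = ev a z - ev b z"
  using suminf_diff[OF assms] by (simp add: ev_def left_diff_distrib)

lemma AD_coeff_Cauchy_bound:
  assumes a: "a \<in> AD" and r: "0 < r" "r < 1" and B: "\<And>z. norm z \<le> r \<Longrightarrow> norm (ev a z) \<le> B"
  shows "norm (a k) \<le> B / r ^ k"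
proof -
  define F where "F = Abs_fps a"
  have radius: "fps_conv_radius F \<ge> 1"
    unfolding F_def fps_conv_radius_def
    by (rule conv_radius_geI_ex') (use a in \<open>auto simp: AD_def\<close>)
  have ev_F: "eval_fps F = ev a"
    unfolding F_def by (auto simp: eval_fps_def ev_def fun_eq_iff)
  have hol: "ev a holomorphic_on ball 0 1"
    unfolding ev_F[symmetric]
  proof (rule holomorphic_on_eval_fps, rule subsetI)
    fix x :: complex assume "x \<in> ball 0 1"
    then have "ereal (norm x) < 1"
      by simp
    then show "x \<in> eball 0 (fps_conv_radius F)"
      using less_le_trans[OF _ radius] by simp
  qed
  then have "ev a holomorphic_on ball 0 r"
    by (rule holomorphic_on_subset) (use r in auto)
  moreover have "continuous_on (cball 0 r) (ev a)"
    using holomorphic_on_imp_continuous_on[OF hol] by (rule continuous_on_subset) (use r in auto)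
  ultimately have "norm ((deriv ^^ k) (ev a) 0) \<le> fact k * B / r ^ k"
    by (rule Cauchy_inequality) (use r B in auto)
  moreover have "a k = (deriv ^^ k) (ev a) 0 / fact k"
    using fps_nth_conv_deriv[of F k] less_le_trans[OF _ radius, of 0] unfolding ev_F by (simp add: F_def)
  ultimately have "fact k * norm (a k) \<le> fact k * (B / r ^ k)"
    by (simp add: norm_divide)
  then show ?thesis
    by (rule mult_left_le_imp_le) simp
qed

lemma lu_nbhd_coeff_bound:
  assumes f: "f \<in> AD" and f': "f' \<in> lu_nbhd f r \<epsilon>" and r: "0 < r" "r < 1"
  shows "norm (f' k - f k) \<le> \<epsilon> / r ^ k"
proof -
  have "f' \<in> AD"
    using f' by (simp add: lu_nbhd_def)
  then have "(\<lambda>k. f' k - f k) \<in> AD"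
    using f unfolding AD_def by (auto simp: left_diff_distrib intro: summable_diff)
  moreover have "norm (ev (\<lambda>k. f' k - f k) z) \<le> \<epsilon>" if "norm z \<le> r" for z
  proof -
    have "ev (\<lambda>k. f' k - f k) z = ev f' z - ev f z"
      using \<open>f' \<in> AD\<close> f that r by (intro ev_diff) (auto simp: AD_def)
    then show ?thesis
      using f' that by (simp add: lu_nbhd_def less_imp_le)
  qed
  ultimately show ?thesis
    using AD_coeff_Cauchy_bound r by blast
qed

lemma powser_terms_bounded:
  fixes a :: "nat \<Rightarrow> 'a::real_normed_div_algebra"
  assumes "summable (\<lambda>k. a k * z ^ k)"
  shows "\<exists>C. \<forall>k. norm (a k) * norm z ^ k \<le> C"
proof -
  have "Bseq (\<lambda>k. a k * z ^ k)"
    using summable_LIMSEQ_zero[OF assms] by (intro convergent_imp_Bseq) (auto simp: convergent_def)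
  then obtain C where "\<forall>k. norm (a k * z ^ k) \<le> C"
    by (auto elim: BseqE)
  then have "\<forall>k. norm (a k) * norm z ^ k \<le> C"
    by (simp add: norm_mult norm_power)
  then show ?thesis
    by blast
qed

lemma AD_coeff_growth:
  assumes "f \<in> AD" "1 < \<tau>"
  shows "\<exists>B. \<forall>k. norm (f k) \<le> B * \<tau> ^ k"
proof -
  have "norm (complex_of_real (1 / \<tau>)) < 1"
    using assms(2) by (simp add: norm_divide)
  then have "summable (\<lambda>k. f k * complex_of_real (1 / \<tau>) ^ k)"
    using assms(1) unfolding AD_def by blast
  from powser_terms_bounded[OF this]
  obtain B where B: "\<And>k. norm (f k) * norm (complex_of_real (1 / \<tau>)) ^ k \<le> B"
    by blast
  have "norm (f k) \<le> B * \<tau> ^ k" for k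
    using B[of k] assms(2) by (simp add: norm_divide power_one_over field_simps)
  then show ?thesis
    by blast
qed

lemma AcD_coeff_decay:
  assumes "g \<in> AcD"
  shows "\<exists>R>1. \<exists>C. \<forall>k. norm (g k) * R ^ k \<le> C"
proof -
  obtain R0 where "R0 > 1" and R0: "\<And>z. norm z < R0 \<Longrightarrow> summable (\<lambda>k. g k * z ^ k)"
    using assms unfolding AcD_def by blast
  define R where "R = (1 + R0) / 2"
  have "1 < R" "R < R0"
    using \<open>R0 > 1\<close> by (auto simp: R_def)
  then have "summable (\<lambda>k. g k * complex_of_real R ^ k)"
    by (intro R0) simp
  from powser_terms_bounded[OF this]
  obtain C where "\<forall>k. norm (g k) * norm (complex_of_real R) ^ k \<le> C"
    by blast
  then show ?thesis
    using \<open>1 < R\<close> by (intro exI[of _ R]) auto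
qed

lemma hada_powser_bound:
  assumes a: "\<And>k. norm (a k) \<le> B * \<tau> ^ k" and g: "\<And>k. norm (g k) * R ^ k \<le> C"
    and w: "norm w \<le> \<tau>" and \<tau>: "0 < \<tau>" "\<tau>\<^sup>2 < R"
  shows "summable (\<lambda>k. hada a g k * w ^ k)"
    and "norm (ev (hada a g) w) \<le> B * C / (1 - \<tau>\<^sup>2 / R)"
proof -
  define q where "q = \<tau>\<^sup>2 / R"
  have "R > 0"
    using \<tau>(2) zero_less_power[OF \<tau>(1), of 2] by linarith
  then have q: "0 \<le> q" "q < 1"
    using \<tau> by (auto simp: q_def)
  have "0 \<le> B" "0 \<le> C"
    using a[of 0] g[of 0] norm_ge_zero[of "a 0"] norm_ge_zero[of "g 0"]
    by (simp_all del: norm_ge_zero)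
  have term_bound: "norm (hada a g k * w ^ k) \<le> B * C * q ^ k" for k
  proof -
    have "norm (g k) \<le> C / R ^ k"
      using g[of k] \<open>R > 0\<close> by (simp add: field_simps)
    then have "norm (hada a g k * w ^ k) \<le> (B * \<tau> ^ k) * (C / R ^ k) * \<tau> ^ k"
      unfolding hada_def norm_mult norm_power
      by (intro mult_mono a power_mono w) (use \<open>0 \<le> B\<close> \<open>0 \<le> C\<close> \<tau> \<open>R > 0\<close> in auto)
    also have "\<dots> = B * C * q ^ k"
      by (simp add: q_def power_divide power_mult_distrib field_simps power2_eq_square)
    finally show ?thesis .
  qed
  have geometric: "summable (\<lambda>k. B * C * q ^ k)"
    using q by (intro summable_mult summable_geometric) auto
  have norm_summable: "summable (\<lambda>k. norm (hada a g k * w ^ k))"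
    by (rule summable_comparison_test[OF _ geometric]) (use term_bound in auto)
  then show "summable (\<lambda>k. hada a g k * w ^ k)"
    by (rule summable_norm_cancel)
  have "norm (ev (hada a g) w) \<le> (\<Sum>k. norm (hada a g k * w ^ k))"
    unfolding ev_def by (rule summable_norm[OF norm_summable])
  also have "\<dots> \<le> (\<Sum>k. B * C * q ^ k)"
    by (rule suminf_le[OF term_bound norm_summable geometric])
  also have "\<dots> = B * C / (1 - q)"
    using q by (simp add: suminf_mult suminf_geometric)
  finally show "norm (ev (hada a g) w) \<le> B * C / (1 - \<tau>\<^sup>2 / R)"
    unfolding q_def .
qed

lemma shrink_to_unit_cball:
  fixes w :: complex
  assumes "1 < \<rho>" "norm w \<le> \<rho>"
  shows "norm (w / of_real \<rho>) \<le> 1" "dist (w / of_real \<rho>) w \<le> \<rho> - 1"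
proof -
  show "norm (w / of_real \<rho>) \<le> 1"
    using assms by (simp add: norm_divide)
  have "w - w / of_real \<rho> = of_real (1 - 1 / \<rho>) * w"
    using assms(1) by (simp add: field_simps)
  then have "dist (w / of_real \<rho>) w = (1 - 1 / \<rho>) * norm w"
    using assms(1) by (simp only: dist_norm norm_minus_commute norm_mult norm_of_real) simp
  also have "\<dots> \<le> (1 - 1 / \<rho>) * \<rho>"
    using assms by (intro mult_left_mono) auto
  also have "\<dots> = \<rho> - 1"
    using assms(1) by (simp add: field_simps)
  finally show "dist (w / of_real \<rho>) w \<le> \<rho> - 1" .
qed

lemma continuous_nonzero_norm_bounded_below:
  fixes F :: "'a::topological_space \<Rightarrow> 'b::real_normed_vector"
  assumes "compact K" "continuous_on K F" "\<And>w. w \<in> K \<Longrightarrow> F w \<noteq> 0"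
  shows "\<exists>m>0. \<forall>w\<in>K. m \<le> norm (F w)"
proof (cases "K = {}")
  case False
  have "continuous_on K (\<lambda>w. norm (F w))"
    using assms(2) by (rule continuous_on_norm)
  then obtain w0 where "w0 \<in> K" "\<forall>w\<in>K. norm (F w0) \<le> norm (F w)"
    using continuous_attains_inf[OF assms(1) False] by blast
  then show ?thesis
    using assms(3) by (intro exI[of _ "norm (F w0)"]) auto
next
  case True
  then show ?thesis
    by (auto intro: exI[of _ 1])
qed

lemma nonzero_near_unit_cball:
  fixes F :: "complex \<Rightarrow> complex"
  assumes cont: "continuous_on (cball 0 \<tau>) F" and "1 < \<tau>"
    and nz: "\<And>w. norm w \<le> 1 \<Longrightarrow> F w \<noteq> 0"
  shows "\<exists>\<rho>>1. \<rho> \<le> \<tau> \<and> (\<exists>m>0. \<forall>w. norm w \<le> \<rho> \<longrightarrow> m \<le> norm (F w))"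
proof -
  have "continuous_on (cball 0 1) F"
    using \<open>1 < \<tau>\<close> by (intro continuous_on_subset[OF cont]) auto
  then have "\<exists>m0>0. \<forall>w\<in>cball 0 1. m0 \<le> norm (F w)"
    by (rule continuous_nonzero_norm_bounded_below[OF compact_cball]) (use nz in auto)
  then obtain m0 where "m0 > 0" and m0: "\<And>w. norm w \<le> 1 \<Longrightarrow> m0 \<le> norm (F w)"
    by auto
  define m where "m = m0 / 2"
  have "m > 0"
    using \<open>m0 > 0\<close> by (simp add: m_def)
  \<comment> \<open>the points where |F| is small lie at positive distance from the closed unit disc\<close>
  define S where "S = {w \<in> cball 0 \<tau>. norm (F w) \<le> m}"
  have "closed S"
    unfolding S_def
    by (intro continuous_on_closed_Collect_le continuous_on_norm cont continuous_on_const closed_cball)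
  moreover have "cball 0 1 \<inter> S = {}"
  proof (rule equals0I)
    fix w assume "w \<in> cball 0 1 \<inter> S"
    then have "m0 \<le> norm (F w)" "norm (F w) \<le> m"
      using m0 by (auto simp: S_def)
    then show False
      using \<open>m > 0\<close> unfolding m_def by linarith
  qed
  ultimately obtain d where "d > 0" and d: "\<And>x y. x \<in> cball 0 1 \<Longrightarrow> y \<in> S \<Longrightarrow> d \<le> dist x y"
    using separate_compact_closed[OF compact_cball] by metis
  define \<rho> where "\<rho> = min \<tau> (1 + d / 2)"
  have "1 < \<rho>" "\<rho> \<le> \<tau>"
    using \<open>1 < \<tau>\<close> \<open>d > 0\<close> by (auto simp: \<rho>_def)
  have "m \<le> norm (F w)" if "norm w \<le> \<rho>" for w
  proof (rule ccontr)
    assume "\<not> m \<le> norm (F w)"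
    then have "w \<in> S"
      using that \<open>\<rho> \<le> \<tau>\<close> by (simp add: S_def)
    have "norm (w / of_real \<rho>) \<le> 1" "dist (w / of_real \<rho>) w \<le> \<rho> - 1"
      using shrink_to_unit_cball[OF \<open>1 < \<rho>\<close> that] by auto
    moreover have "\<rho> - 1 < d"
      using \<open>d > 0\<close> unfolding \<rho>_def by linarith
    ultimately have "dist (w / of_real \<rho>) w < d"
      by linarith
    then show False
      using d[of "w / of_real \<rho>" w] \<open>norm (w / of_real \<rho>) \<le> 1\<close> \<open>w \<in> S\<close> by simp
  qed
  then show ?thesis
    using \<open>1 < \<rho>\<close> \<open>\<rho> \<le> \<tau>\<close> \<open>m > 0\<close> by blast
qed

text \<open>Cauchy estimates on the disc of radius 1/\<tau> give |f'_k - f_k| \<le> \<epsilon> \<tau>^k, and \<tau>^2 < R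
  makes the Hadamard product of these differences with g converge on |w| \<le> \<tau>.\<close>

lemma hada_lu_nbhd_close:
  assumes f: "f \<in> AD" and f': "f' \<in> lu_nbhd f (1 / \<tau>) \<epsilon>"
    and g: "\<And>k. norm (g k) * R ^ k \<le> C" and \<tau>: "1 < \<tau>" "\<tau>\<^sup>2 < R" and w: "norm w \<le> \<tau>"
  shows "norm (ev (hada f' g) w - ev (hada f g) w) \<le> \<epsilon> * C / (1 - \<tau>\<^sup>2 / R)"
proof -
  have "f' \<in> AD"
    using f' by (simp add: lu_nbhd_def)
  obtain B where B: "\<And>k. norm (f k) \<le> B * \<tau> ^ k"
    using AD_coeff_growth[OF f \<tau>(1)] by blast
  obtain B' where B': "\<And>k. norm (f' k) \<le> B' * \<tau> ^ k"
    using AD_coeff_growth[OF \<open>f' \<in> AD\<close> \<tau>(1)] by blast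
  have diff: "norm (f' k - f k) \<le> \<epsilon> * \<tau> ^ k" for k
    using lu_nbhd_coeff_bound[OF f f', of k] \<tau>(1) by (simp add: power_one_over)
  have "hada (\<lambda>k. f' k - f k) g = (\<lambda>k. hada f' g k - hada f g k)"
    by (simp add: hada_def fun_eq_iff left_diff_distrib)
  then have "ev (hada (\<lambda>k. f' k - f k) g) w = ev (hada f' g) w - ev (hada f g) w"
    using hada_powser_bound(1)[OF B g w] hada_powser_bound(1)[OF B' g w] \<tau>
    by (simp add: ev_diff)
  then show ?thesis
    using hada_powser_bound(2)[OF diff g w] \<tau> by simp
qed

lemma square_between:
  fixes R :: real
  assumes "1 < R"
  shows "\<exists>\<tau>>1. \<tau>\<^sup>2 < R"
proof -
  define \<tau> where "\<tau> = (1 + sqrt R) / 2"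
  have "1 < sqrt R"
    using assms by simp
  then have "1 < \<tau>" "\<tau> < sqrt R"
    by (auto simp: \<tau>_def)
  then have "\<tau>\<^sup>2 < (sqrt R)\<^sup>2"
    by (intro power_strict_mono) auto
  then show ?thesis
    using assms \<open>1 < \<tau>\<close> by auto
qed

lemma hada_lu_continuous_on_cball:
  assumes f: "f \<in> AD" and g: "g \<in> AcD"
  shows "\<exists>\<tau>>1. continuous_on (cball 0 \<tau>) (ev (hada f g)) \<and>
    (\<forall>\<delta>>0. \<exists>r<1. \<exists>\<epsilon>>0. \<forall>f'\<in>lu_nbhd f r \<epsilon>. \<forall>w. norm w \<le> \<tau> \<longrightarrow>
       norm (ev (hada f' g) w - ev (hada f g) w) < \<delta>)"
proof -
  obtain R C where "R > 1" and C: "\<And>k. norm (g k) * R ^ k \<le> C"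
    using AcD_coeff_decay[OF g] by blast
  obtain \<tau> where \<tau>: "1 < \<tau>" and "\<tau>\<^sup>2 < R"
    using square_between[OF \<open>R > 1\<close>] by blast
  obtain B where B: "\<And>k. norm (f k) \<le> B * \<tau> ^ k"
    using AD_coeff_growth[OF f \<tau>(1)] by blast
  have "summable (\<lambda>k. hada f g k * of_real \<tau> ^ k)"
    by (rule hada_powser_bound(1)[OF B C]) (use \<tau> \<open>\<tau>\<^sup>2 < R\<close> in auto)
  then have "continuous_on (cball 0 ((1 + \<tau>) / 2)) (ev (hada f g))"
    unfolding ev_def using \<tau>(1)
    by (intro continuous_at_imp_continuous_on ballI isCont_powser) auto
  moreover have "\<exists>r<1. \<exists>\<epsilon>>0. \<forall>f'\<in>lu_nbhd f r \<epsilon>. \<forall>w. norm w \<le> (1 + \<tau>) / 2 \<longrightarrow>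
      norm (ev (hada f' g) w - ev (hada f g) w) < \<delta>" if "\<delta> > 0" for \<delta>
  proof -
    define q where "q = \<tau>\<^sup>2 / R"
    have "q < 1" "0 \<le> C"
      using \<open>\<tau>\<^sup>2 < R\<close> \<open>R > 1\<close> C[of 0] norm_ge_zero[of "g 0"]
      by (simp_all add: q_def del: norm_ge_zero)
    define \<epsilon> where "\<epsilon> = \<delta> * (1 - q) / (2 * (C + 1))"
    have "\<epsilon> > 0"
      using \<open>\<delta> > 0\<close> \<open>q < 1\<close> \<open>0 \<le> C\<close> by (simp add: \<epsilon>_def)
    have "\<epsilon> * C / (1 - q) = \<delta> * (C / (2 * (C + 1)))"
      using \<open>q < 1\<close> by (simp add: \<epsilon>_def)
    also have "\<dots> < \<delta> * 1"
      using \<open>\<delta> > 0\<close> \<open>0 \<le> C\<close> by (intro mult_strict_left_mono) auto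
    finally have "\<epsilon> * C / (1 - \<tau>\<^sup>2 / R) < \<delta>"
      by (simp add: q_def)
    moreover have "norm w \<le> \<tau>" if "norm w \<le> (1 + \<tau>) / 2" for w :: complex
      using that \<tau>(1) by simp
    ultimately have "\<forall>f'\<in>lu_nbhd f (1 / \<tau>) \<epsilon>. \<forall>w. norm w \<le> (1 + \<tau>) / 2 \<longrightarrow>
        norm (ev (hada f' g) w - ev (hada f g) w) < \<delta>"
      using hada_lu_nbhd_close[OF f _ C \<tau>(1) \<open>\<tau>\<^sup>2 < R\<close>] by (meson le_less_trans)
    then show ?thesis
      using \<tau>(1) \<open>\<epsilon> > 0\<close> by (intro exI[of _ "1 / \<tau>"] conjI exI[of _ \<epsilon>]) auto
  qed
  moreover have "1 < (1 + \<tau>) / 2"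
    using \<tau>(1) by simp
  ultimately show ?thesis
    by blast
qed

lemma hada_nonzero_locally_stable:
  assumes f: "f \<in> AD" and g: "g \<in> AcD" and nz: "\<And>w. norm w \<le> 1 \<Longrightarrow> ev (hada f g) w \<noteq> 0"
  shows "\<exists>\<rho>>1. \<exists>r<1. \<exists>\<epsilon>>0. lu_nbhd f r \<epsilon> \<subseteq> {f'. \<forall>w. norm w \<le> \<rho> \<longrightarrow> ev (hada f' g) w \<noteq> 0}"
proof -
  obtain \<tau> where "1 < \<tau>" and cont: "continuous_on (cball 0 \<tau>) (ev (hada f g))"
    and close: "\<And>\<delta>. \<delta> > 0 \<Longrightarrow> \<exists>r<1. \<exists>\<epsilon>>0. \<forall>f'\<in>lu_nbhd f r \<epsilon>. \<forall>w. norm w \<le> \<tau> \<longrightarrow>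
        norm (ev (hada f' g) w - ev (hada f g) w) < \<delta>"
    using hada_lu_continuous_on_cball[OF f g] by blast
  obtain \<rho> m where "1 < \<rho>" "\<rho> \<le> \<tau>" "m > 0"
    and m: "\<And>w. norm w \<le> \<rho> \<Longrightarrow> m \<le> norm (ev (hada f g) w)"
    using nonzero_near_unit_cball[OF cont \<open>1 < \<tau>\<close>] nz by blast
  obtain r \<epsilon> where "r < 1" "\<epsilon> > 0" and r: "\<And>f' w. f' \<in> lu_nbhd f r \<epsilon> \<Longrightarrow> norm w \<le> \<tau> \<Longrightarrow>
      norm (ev (hada f' g) w - ev (hada f g) w) < m"
    using close[OF \<open>m > 0\<close>] by blast
  have "ev (hada f' g) w \<noteq> 0" if "f' \<in> lu_nbhd f r \<epsilon>" "norm w \<le> \<rho>" for f' w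
  proof -
    have "m \<le> norm (ev (hada f g) w)"
      using m that(2) .
    also have "\<dots> \<le> norm (ev (hada f' g) w) + norm (ev (hada f' g) w - ev (hada f g) w)"
      using norm_triangle_sub[of "ev (hada f g) w" "ev (hada f' g) w"] by (simp add: norm_minus_commute)
    finally have "m \<le> norm (ev (hada f' g) w) + norm (ev (hada f' g) w - ev (hada f g) w)" .
    moreover have "norm (ev (hada f' g) w - ev (hada f g) w) < m"
      using r[OF that(1)] that(2) \<open>\<rho> \<le> \<tau>\<close> by simp
    ultimately show ?thesis
      by auto
  qed
  then show ?thesis
    using \<open>1 < \<rho>\<close> \<open>r < 1\<close> \<open>\<epsilon> > 0\<close> by blast
qed

lemma compactin_hada_uniform_nonzero_radius:
  assumes V: "compactin LU V" "V \<subseteq> AD" and g: "g \<in> AcD"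
    and nz: "\<And>f w. f \<in> V \<Longrightarrow> norm w \<le> 1 \<Longrightarrow> ev (hada f g) w \<noteq> 0"
  shows "\<exists>\<rho>>1. \<forall>f\<in>V. \<forall>w. norm w \<le> \<rho> \<longrightarrow> ev (hada f g) w \<noteq> 0"
proof -
  define S where "S \<rho> = {f'. \<forall>w. norm w \<le> \<rho> \<longrightarrow> ev (hada f' g) w \<noteq> 0}" for \<rho>
  have "\<exists>\<rho>>1. \<exists>r<1. \<exists>\<epsilon>>0. lu_nbhd f r \<epsilon> \<subseteq> S \<rho>" if "f \<in> V" for f
    unfolding S_def by (rule hada_nonzero_locally_stable[OF _ g]) (use that V(2) nz in auto)
  then have "\<forall>f\<in>V. \<exists>\<rho>>1. \<exists>r<1. \<exists>\<epsilon>>0. lu_nbhd f r \<epsilon> \<subseteq> S \<rho>"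
    by blast
  from bchoice[OF this] obtain \<rho>
    where \<rho>: "\<forall>f\<in>V. 1 < \<rho> f \<and> (\<exists>r<1. \<exists>\<epsilon>>0. lu_nbhd f r \<epsilon> \<subseteq> S (\<rho> f))"
    by blast
  have "\<exists>F. finite F \<and> F \<subseteq> V \<and> V \<subseteq> (\<Union>f\<in>F. S (\<rho> f))"
    by (rule compactin_LU_finite_cover[OF V]) (use \<rho> in blast)
  then obtain F where "finite F" "F \<subseteq> V" and cover: "V \<subseteq> (\<Union>f\<in>F. S (\<rho> f))"
    by blast
  define \<rho>0 where "\<rho>0 = Min (insert 2 (\<rho> ` F))"
  have "1 < \<rho>0"
    unfolding \<rho>0_def using \<open>finite F\<close> \<open>F \<subseteq> V\<close> \<rho> by (subst Min_gr_iff) auto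
  have "V \<subseteq> S \<rho>0"
  proof
    fix f' assume "f' \<in> V"
    then obtain f where "f \<in> F" "f' \<in> S (\<rho> f)"
      using cover by blast
    moreover have "\<rho>0 \<le> \<rho> f"
      unfolding \<rho>0_def using \<open>finite F\<close> \<open>f \<in> F\<close> by (intro Min_le) auto
    ultimately show "f' \<in> S \<rho>0"
      unfolding S_def by auto
  qed
  then show ?thesis
    using \<open>1 < \<rho>0\<close> unfolding S_def by blast
qed

lemma dual_T_cm_iff:
  "g \<in> dual_T (cm V) \<longleftrightarrow> g \<in> A0cD \<and> (\<forall>f\<in>V. \<forall>w. norm w \<le> 1 \<longrightarrow> ev (hada f g) w \<noteq> 0)"
proof -
  have key: "ev (hada (Px w f) g) 1 = ev (hada f g) w" for w :: complex and f
    by (simp add: hada_Px_left ev_Px)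
  have "(\<forall>f'\<in>cm V. ev (hada f' g) 1 \<noteq> 0) \<longleftrightarrow> (\<forall>f\<in>V. \<forall>w. norm w \<le> 1 \<longrightarrow> ev (hada f g) w \<noteq> 0)"
  proof (intro iffI ballI allI impI)
    fix f and w :: complex
    assume "\<forall>f'\<in>cm V. ev (hada f' g) 1 \<noteq> 0" "f \<in> V" "norm w \<le> 1"
    moreover have "Px w f \<in> cm V"
      using \<open>f \<in> V\<close> \<open>norm w \<le> 1\<close> by (auto simp: cm_def)
    ultimately show "ev (hada f g) w \<noteq> 0"
      by (metis key)
  next
    fix f' assume nz: "\<forall>f\<in>V. \<forall>w. norm w \<le> 1 \<longrightarrow> ev (hada f g) w \<noteq> 0" and "f' \<in> cm V"
    then obtain f w where "f' = Px w f" "f \<in> V" "norm w \<le> 1"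
      by (auto simp: cm_def)
    then show "ev (hada f' g) 1 \<noteq> 0"
      using nz by (simp add: key)
  qed
  then show ?thesis
    unfolding dual_T_def by blast
qed

lemma contraction_in_dual_T_cm:
  assumes h: "h \<in> dual_star V" and x: "norm x < 1"
  shows "Px x h \<in> dual_T (cm V)"
proof -
  have "h \<in> AD" "h 0 = 1"
    using h by (auto simp: dual_star_def A0_def)
  \<comment> \<open>a radius between 1 and 1/|x| that needs no case split on x = 0\<close>
  define R where "R = 2 / (1 + norm x)"
  have "0 < 1 + norm x"
    by (simp add: add_pos_nonneg)
  then have "1 < R"
    using x by (simp add: R_def field_simps)
  have small: "norm (x * z) < 1" if "norm z < R" for z
  proof -
    have "norm x * norm z \<le> norm x * R"
      using that by (intro mult_left_mono) auto
    also have "\<dots> < 1"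
      using x \<open>0 < 1 + norm x\<close> by (simp add: R_def field_simps)
    finally show ?thesis
      by (simp add: norm_mult)
  qed
  have "summable (\<lambda>k. Px x h k * z ^ k)" if "norm z < R" for z
    using \<open>h \<in> AD\<close> small[OF that] by (simp add: summable_Px_iff AD_def)
  then have "Px x h \<in> A0cD"
    using \<open>1 < R\<close> \<open>h 0 = 1\<close> by (auto simp: A0cD_def AcD_def Px_def)
  moreover have "ev (hada f (Px x h)) w \<noteq> 0" if "f \<in> V" "norm w \<le> 1" for f w
  proof -
    have "norm (x * w) < 1"
      using x that(2) by (simp add: norm_mult mult_le_one le_less_trans[OF mult_right_le_one_le])
    then show ?thesis
      using h that(1) by (simp add: hada_Px_right ev_Px dual_star_def)
  qed
  ultimately show ?thesis
    by (simp add: dual_T_cm_iff)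
qed

lemma dilation_in_dual_star:
  assumes "0 < \<rho>" "g 0 = 1" and g: "\<And>z. norm z < \<rho> \<Longrightarrow> summable (\<lambda>k. g k * z ^ k)"
    and nz: "\<And>f w. f \<in> V \<Longrightarrow> norm w < \<rho> \<Longrightarrow> ev (hada f g) w \<noteq> 0"
  shows "Px (of_real \<rho>) g \<in> dual_star V"
proof -
  have dilate: "norm (of_real \<rho> * z) < \<rho>" if "norm z < 1" for z :: complex
    using that \<open>0 < \<rho>\<close> by (simp add: norm_mult)
  have "summable (\<lambda>k. Px (of_real \<rho>) g k * z ^ k)" if "norm z < 1" for z
    using g[OF dilate[OF that]] by (simp add: summable_Px_iff)
  then have "Px (of_real \<rho>) g \<in> A0"
    using \<open>g 0 = 1\<close> by (simp add: A0_def AD_def Px_def)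
  moreover have "ev (hada f (Px (of_real \<rho>) g)) z \<noteq> 0" if "f \<in> V" "norm z < 1" for f z
    using nz[OF that(1) dilate[OF that(2)]] by (simp add: hada_Px_right ev_Px)
  ultimately show ?thesis
    by (auto simp: dual_star_def)
qed

lemma dual_T_cm_imp_contraction:
  assumes V: "compactin LU V" "V \<subseteq> AD" and g: "g \<in> dual_T (cm V)"
  shows "\<exists>h\<in>dual_star V. \<exists>x. norm x < 1 \<and> g = Px x h"
proof -
  have "g \<in> A0cD" and nz: "\<And>f w. f \<in> V \<Longrightarrow> norm w \<le> 1 \<Longrightarrow> ev (hada f g) w \<noteq> 0"
    using g by (auto simp: dual_T_cm_iff)
  then have "g \<in> AcD" "g 0 = 1"
    by (auto simp: A0cD_def)
  then obtain R where "R > 1" and R: "\<And>z. norm z < R \<Longrightarrow> summable (\<lambda>k. g k * z ^ k)"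
    unfolding AcD_def by blast
  obtain \<rho>0 where "\<rho>0 > 1" and \<rho>0: "\<forall>f\<in>V. \<forall>w. norm w \<le> \<rho>0 \<longrightarrow> ev (hada f g) w \<noteq> 0"
    using compactin_hada_uniform_nonzero_radius[OF V \<open>g \<in> AcD\<close> nz] by blast
  define \<rho> where "\<rho> = min \<rho>0 R"
  have "1 < \<rho>"
    using \<open>\<rho>0 > 1\<close> \<open>R > 1\<close> by (simp add: \<rho>_def)
  have "Px (of_real \<rho>) g \<in> dual_star V"
    using \<open>1 < \<rho>\<close> \<open>g 0 = 1\<close> R \<rho>0 by (intro dilation_in_dual_star) (auto simp: \<rho>_def)
  moreover define x :: complex where "x = of_real (1 / \<rho>)"
  have "norm x < 1"
    unfolding x_def norm_of_real using \<open>1 < \<rho>\<close> by simp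
  moreover have "x * of_real \<rho> = 1"
    using \<open>1 < \<rho>\<close> by (simp add: x_def flip: of_real_mult)
  then have "g = Px x (Px (of_real \<rho>) g)"
    by (simp only: Px_Px Px_1)
  ultimately show ?thesis
    by blast
qed

lemma compactin_LU_coeff_bounded:
  assumes "compactin LU V" "V \<subseteq> AD"
  shows "\<exists>M. \<forall>f\<in>V. norm (f k) \<le> M"
proof -
  define S where "S f = {f' :: nat \<Rightarrow> complex. norm (f' k) \<le> norm (f k) + 2 ^ k}"
    for f :: "nat \<Rightarrow> complex"
  have "\<exists>r<1. \<exists>\<epsilon>>0. lu_nbhd f r \<epsilon> \<subseteq> S f" if "f \<in> V" for f
  proof -
    have "lu_nbhd f (1/2) 1 \<subseteq> S f"
    proof
      fix f' assume "f' \<in> lu_nbhd f (1/2) 1"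
      then have "norm (f' k - f k) \<le> 2 ^ k"
        using lu_nbhd_coeff_bound[of f f' "1/2" 1 k] that assms(2) by (auto simp: power_one_over)
      then show "f' \<in> S f"
        using norm_triangle_sub[of "f' k" "f k"] by (simp add: S_def)
    qed
    moreover have "(1/2 :: real) < 1" "(0 :: real) < 1"
      by simp_all
    ultimately show ?thesis
      by blast
  qed
  then have "\<exists>F. finite F \<and> F \<subseteq> V \<and> V \<subseteq> (\<Union>f\<in>F. S f)"
    by (rule compactin_LU_finite_cover[OF assms])
  then obtain F where "finite F" "V \<subseteq> (\<Union>f\<in>F. S f)"
    by blast
  moreover obtain M where "\<forall>f\<in>F. norm (f k) + 2 ^ k \<le> M"
    using bdd_above_finite[of "(\<lambda>f. norm (f k) + 2 ^ k) ` F"] \<open>finite F\<close> by (auto simp: bdd_above_def)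
  ultimately have "\<forall>f\<in>V. norm (f k) \<le> M"
    unfolding S_def by fastforce
  then show ?thesis
    by blast
qed

lemma linear_in_dual_star:
  assumes V: "V \<subseteq> A0" and c: "\<And>f. f \<in> V \<Longrightarrow> norm (f 1 * c) \<le> 1"
  shows "(\<lambda>k. if k = 0 then 1 else if k = 1 then c else 0) \<in> dual_star V"
    (is "?h \<in> _")
proof -
  have ev_h: "ev (hada f ?h) z = f 0 + f 1 * c * z" for f z
  proof -
    have "ev (hada f ?h) z = (\<Sum>k\<in>{0, 1}. hada f ?h k * z ^ k)"
      unfolding ev_def by (rule suminf_finite) (auto simp: hada_def)
    then show ?thesis
      by (simp add: hada_def)
  qed
  have "summable (\<lambda>k. ?h k * z ^ k)" for z
    by (rule summable_finite[of "{0, 1}"]) auto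
  then have "?h \<in> A0"
    by (simp add: A0_def AD_def)
  moreover have "ev (hada f ?h) z \<noteq> 0" if "f \<in> V" "norm z < 1" for f z
  proof -
    have "norm (f 1 * c * z) \<le> 1 * norm z"
      unfolding norm_mult[of "f 1 * c"] using c[OF that(1)] by (intro mult_right_mono) auto
    then have "norm (f 1 * c * z) < 1"
      using that(2) by simp
    moreover have "f 0 = 1"
      using that(1) V by (auto simp: A0_def)
    ultimately show ?thesis
      unfolding ev_h by (metis add_eq_0_iff norm_minus_cancel norm_one order_less_irrefl)
  qed
  ultimately show ?thesis
    by (simp add: dual_star_def)
qed

lemma dual_star_ne_one:
  assumes "V \<subseteq> A0" "compactin LU V"
  shows "dual_star V \<noteq> {one_fn}"
proof -
  have "V \<subseteq> AD"
    using assms(1) by (auto simp: A0_def)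
  obtain M where M: "\<And>f. f \<in> V \<Longrightarrow> norm (f 1) \<le> M"
    using compactin_LU_coeff_bounded[OF assms(2) \<open>V \<subseteq> AD\<close>, of 1] by blast
  define c :: complex where "c = of_real (1 / (\<bar>M\<bar> + 1))"
  have "norm c = 1 / (\<bar>M\<bar> + 1)"
    unfolding c_def norm_of_real by simp
  then have "c \<noteq> 0"
    by auto
  have "norm (f 1 * c) \<le> 1" if "f \<in> V" for f
  proof -
    have "norm (f 1 * c) = norm (f 1) / (\<bar>M\<bar> + 1)"
      using \<open>norm c = 1 / (\<bar>M\<bar> + 1)\<close> by (simp add: norm_mult)
    also have "\<dots> \<le> 1"
      using M[OF that] by (simp add: pos_divide_le_eq add_pos_nonneg)
    finally show ?thesis .
  qed
  then have "(\<lambda>k. if k = 0 then 1 else if k = 1 then c else 0) \<in> dual_star V"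
    using linear_in_dual_star[OF assms(1)] by blast
  moreover have "(\<lambda>k. if k = 0 then 1 else if k = 1 then c else 0) \<noteq> one_fn"
  proof
    assume "(\<lambda>k. if k = 0 then 1 else if k = 1 then c else 0) = one_fn"
    from fun_cong[OF this, of 1] have "c = one_fn 1"
      by simp
    then show False
      using \<open>c \<noteq> 0\<close> by (simp add: one_fn_def)
  qed
  ultimately show ?thesis
    by blast
qed

theorem theorem6:
  assumes "V \<subseteq> A0" and "compactin LU V"
  shows "bor (dual_star V) = dual_star V - dual_T (cm V)"
proof -
  have "V \<subseteq> AD"
    using assms(1) by (auto simp: A0_def)
  then have "g \<in> dual_T (cm V) \<longleftrightarrow> (\<exists>h\<in>dual_star V. \<exists>x. norm x < 1 \<and> g = Px x h)" for g
    using dual_T_cm_imp_contraction[OF assms(2)] contraction_in_dual_T_cm by blast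
  moreover have "bor (dual_star V) = {g \<in> dual_star V. \<forall>h\<in>dual_star V. \<forall>x.
      norm x \<le> 1 \<longrightarrow> g = Px x h \<longrightarrow> norm x = 1}"
    unfolding bor_def using dual_star_ne_one[OF assms] by simp
  ultimately show ?thesis
    by (auto simp: order_le_less)
qed

end
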